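(* For any set of $n$ points in the plane there is a conflict-free coloring with respect to axis-parallel rectangles using $O(\sqrt{n}\log n)$ colors that allows weak deletions at the cost of one recoloring per deletion.
   Context: A coloring of a point set $P$ is conflict-free with respect to rectangles if every axis-parallel rectangle containing at least one point of $P$ contains a point whose color is unique among the points of $P$ it contains. Allowing weak deletions at cost one means: points can be deleted one at a time, each deletion recoloring at most one remaining point, such that the coloring remains valid and the number of colors never exceeds the initial bound. *)

theory Defs
  imports Complex_Main
begin

type_synonym point = "real \<times> real"

definition rect :: "real \<Rightarrow> real \<Rightarrow> real \<Rightarrow> real \<Rightarrow> point set" where
  "rect a1 b1 a2 b2 = {p. a1 \<le> fst p \<and> fst p \<le> b1 \<and> a2 \<le> snd p \<and> snd p \<le> b2}"

definition conflict_free_rect :: "point set \<Rightarrow> (point \<Rightarrow> nat) \<Rightarrow> bool" where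
  "conflict_free_rect S c \<longleftrightarrow>
     (\<forall>a1 b1 a2 b2. rect a1 b1 a2 b2 \<inter> S \<noteq> {} \<longrightarrow>
        (\<exists>p \<in> rect a1 b1 a2 b2 \<inter> S. \<forall>q \<in> rect a1 b1 a2 b2 \<inter> S. q \<noteq> p \<longrightarrow> c q \<noteq> c p))"

inductive weak_del :: "nat \<Rightarrow> point set \<Rightarrow> (point \<Rightarrow> nat) \<Rightarrow> bool" for k where
  "\<lbrakk> finite S; conflict_free_rect S c; card (c ` S) \<le> k;
     \<forall>p \<in> S. \<exists>c'. card {q \<in> S - {p}. c' q \<noteq> c q} \<le> 1 \<and> weak_del k (S - {p}) c' \<rbrakk>
   \<Longrightarrow> weak_del k S c"

end

theory Submission
  imports Defs "HOL-Computational_Algebra.Primes"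
begin

text \<open>
  Partition the \<open>n\<close> points into at most \<open>2\<surd>n\<close> chains that are monotone (increasing or
  decreasing) in the dominance order: greedily remove increasing chains of length \<open>\<ge> \<surd>n\<close>;
  once none is left, the length of the longest increasing chain ending at a point splits the rest
  into at most \<open>\<surd>n\<close> decreasing chains (Mirsky).  Along a monotone chain a rectangle cuts out a
  contiguous interval, so it suffices to colour each chain, with its own palette, such that every
  interval has a unique maximal colour; the ruler colouring (2-adic valuation of the rank) does
  this with \<open>O(log n)\<close> colours.  This property survives deleting a point \<open>p\<close> if one neighbour
  \<open>q\<close> of \<open>p\<close> in its chain takes the larger of the colours of \<open>p\<close> and \<open>q\<close>.
\<close>

section \<open>The ruler sequence\<close>

lemma multiplicity_2_between:
  fixes r1 r2 :: nat
  assumes "0 < r1" "r1 < r2" "multiplicity 2 r1 = v" "multiplicity 2 r2 = v"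
  shows "\<exists>r. r1 < r \<and> r < r2 \<and> v < multiplicity 2 r"
proof -
  obtain o1 where o1: "r1 = 2 ^ v * o1" "odd o1"
    using multiplicity_decompose'[of r1 "2::nat"] assms(1,3) by auto
  obtain o2 where o2: "r2 = 2 ^ v * o2" "odd o2"
    using multiplicity_decompose'[of r2 "2::nat"] assms(1,2,4) by auto
  have "o1 < o2" using o1(1) o2(1) \<open>r1 < r2\<close> by simp
  then have "o1 + 1 < o2" using o1(2) o2(2) by presburger
  then have "r1 < 2 ^ v * (o1 + 1)" "2 ^ v * (o1 + 1) < r2"
    using o1(1) o2(1) by (simp, simp only: mult_strict_left_mono zero_less_power zero_less_numeral)
  moreover have "2 ^ Suc v dvd 2 ^ v * (o1 + 1)"
    using \<open>odd o1\<close> by (auto elim!: oddE)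
  then have "Suc v \<le> multiplicity 2 (2 ^ v * (o1 + 1))"
    by (intro multiplicity_geI) simp_all
  ultimately show ?thesis by (intro exI[of _ "2 ^ v * (o1 + 1)"]) auto
qed

lemma multiplicity_2_unique_max:
  fixes a b :: nat
  assumes "0 < a" "a \<le> b"
  shows "\<exists>m\<in>{a..b}. \<forall>r\<in>{a..b}. r \<noteq> m \<longrightarrow> multiplicity 2 r < multiplicity 2 m"
proof -
  let ?v = "multiplicity (2::nat)"
  have "Max (?v ` {a..b}) \<in> ?v ` {a..b}"
    using assms(2) by (intro Max_in) auto
  then obtain m where m: "m \<in> {a..b}" "?v m = Max (?v ` {a..b})"
    by (metis imageE)
  have max: "?v r \<le> ?v m" if "r \<in> {a..b}" for r
    using m(2) that by simp
  have "?v r < ?v m" if r: "r \<in> {a..b}" "r \<noteq> m" for r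
  proof (rule ccontr)
    assume "\<not> ?v r < ?v m"
    then have eq: "?v r = ?v m" using max[OF r(1)] by simp
    have "\<exists>x. min r m < x \<and> x < max r m \<and> ?v m < ?v x"
    proof (cases "r < m")
      case True
      then show ?thesis using multiplicity_2_between[of r m "?v m"] eq r(1) assms(1) by auto
    next
      case False
      then have "m < r" using r(2) by simp
      then show ?thesis using multiplicity_2_between[of m r "?v m"] eq m(1) assms(1) by auto
    qed
    then obtain x where "min r m < x" "x < max r m" "?v m < ?v x" by blast
    moreover have "x \<in> {a..b}" using calculation(1,2) r(1) m(1) by auto
    ultimately show False using max[of x] by simp
  qed
  then show ?thesis using m(1) by blast
qed

section \<open>Colourings with a unique maximum on every interval\<close>

definition key_convex :: "('a \<Rightarrow> 'b::linorder) \<Rightarrow> 'a set \<Rightarrow> 'a set \<Rightarrow> bool" where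
  "key_convex key A T \<longleftrightarrow> (\<forall>a\<in>T. \<forall>b\<in>T. \<forall>x\<in>A. key a \<le> key x \<longrightarrow> key x \<le> key b \<longrightarrow> x \<in> T)"

definition interval_unique_max :: "('a \<Rightarrow> 'b::linorder) \<Rightarrow> 'a set \<Rightarrow> ('a \<Rightarrow> nat) \<Rightarrow> bool" where
  "interval_unique_max key A c \<longleftrightarrow>
     (\<forall>T \<subseteq> A. T \<noteq> {} \<longrightarrow> key_convex key A T \<longrightarrow> (\<exists>m\<in>T. \<forall>t\<in>T. t \<noteq> m \<longrightarrow> c t < c m))"

lemma interval_unique_maxD:
  assumes "interval_unique_max key A c" "T \<subseteq> A" "T \<noteq> {}" "key_convex key A T"
  shows "\<exists>m\<in>T. \<forall>t\<in>T. t \<noteq> m \<longrightarrow> c t < c m"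
  using assms unfolding interval_unique_max_def by blast

lemma key_convex_Int_subset:
  "key_convex key A (R \<inter> A) \<Longrightarrow> B \<subseteq> A \<Longrightarrow> key_convex key B (R \<inter> B)"
  unfolding key_convex_def by blast

lemma interval_unique_max_empty: "interval_unique_max key {} c"
  unfolding interval_unique_max_def by blast

lemma interval_unique_max_strict_mono:
  assumes "interval_unique_max key A c"
    and "\<And>x y. x \<in> A \<Longrightarrow> y \<in> A \<Longrightarrow> c x < c y \<Longrightarrow> c' x < c' y"
  shows "interval_unique_max key A c'"
  unfolding interval_unique_max_def
proof (intro allI impI)
  fix T assume T: "T \<subseteq> A" "T \<noteq> {}" "key_convex key A T"
  then obtain m where "m \<in> T" "\<forall>t\<in>T. t \<noteq> m \<longrightarrow> c t < c m"
    using interval_unique_maxD[OF assms(1)] by blast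
  then show "\<exists>m\<in>T. \<forall>t\<in>T. t \<noteq> m \<longrightarrow> c' t < c' m"
    using assms(2) T(1) by blast
qed

definition key_rank :: "'a set \<Rightarrow> ('a \<Rightarrow> 'b::linorder) \<Rightarrow> 'a \<Rightarrow> nat" where
  "key_rank A key x = card {y\<in>A. key y \<le> key x}"

lemma key_rank_mono: "finite A \<Longrightarrow> key x \<le> key y \<Longrightarrow> key_rank A key x \<le> key_rank A key y"
  unfolding key_rank_def by (intro card_mono) auto

lemma key_rank_strict_mono:
  assumes "finite A" "y \<in> A" "key x < key y"
  shows "key_rank A key x < key_rank A key y"
proof -
  have "{z\<in>A. key z \<le> key x} \<subseteq> {z\<in>A. key z \<le> key y}"
    using assms(3) by (auto intro: order_trans less_imp_le)
  moreover have "y \<in> {z\<in>A. key z \<le> key y} - {z\<in>A. key z \<le> key x}"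
    using assms(2,3) by auto
  ultimately have "{z\<in>A. key z \<le> key x} \<subset> {z\<in>A. key z \<le> key y}" by blast
  then show ?thesis unfolding key_rank_def using assms(1) by (intro psubset_card_mono) auto
qed

lemma key_rank_bounds:
  assumes "finite A" "x \<in> A"
  shows "0 < key_rank A key x" "key_rank A key x \<le> card A"
  unfolding key_rank_def using assms by (auto intro!: card_mono simp: card_gt_0_iff)

lemma key_rank_bij:
  assumes "finite A" "inj_on key A"
  shows "bij_betw (key_rank A key) A {1..card A}"
proof -
  have inj: "inj_on (key_rank A key) A"
  proof (rule inj_onI)
    fix x y assume xy: "x \<in> A" "y \<in> A" "key_rank A key x = key_rank A key y"
    have "key x = key y"
    proof (rule ccontr)
      assume "key x \<noteq> key y"
      then have "key x < key y \<or> key y < key x" by auto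
      then show False using key_rank_strict_mono[OF assms(1)] xy by (metis less_irrefl)
    qed
    then show "x = y" using assms(2) xy by (meson inj_onD)
  qed
  have "key_rank A key ` A \<subseteq> {1..card A}"
    using key_rank_bounds[OF assms(1)] by (auto simp: Suc_le_eq)
  moreover have "card (key_rank A key ` A) = card {1..card A}"
    using card_image[OF inj] by simp
  ultimately show ?thesis
    using inj by (simp add: bij_betw_def card_subset_eq)
qed

lemma key_rank_image_key_convex:
  assumes fin: "finite A" and inj: "inj_on key A" and T: "T \<subseteq> A" "key_convex key A T"
    and a: "a \<in> T" "\<And>x. x \<in> T \<Longrightarrow> key a \<le> key x"
    and b: "b \<in> T" "\<And>x. x \<in> T \<Longrightarrow> key x \<le> key b"
  shows "key_rank A key ` T = {key_rank A key a..key_rank A key b}"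
proof
  let ?rk = "key_rank A key"
  show "?rk ` T \<subseteq> {?rk a..?rk b}"
    using a b by (auto intro!: key_rank_mono[OF fin])
  show "{?rk a..?rk b} \<subseteq> ?rk ` T"
  proof
    fix r assume r: "r \<in> {?rk a..?rk b}"
    have "a \<in> A" "b \<in> A" using a(1) b(1) T(1) by auto
    then have "0 < ?rk a" "?rk b \<le> card A" using key_rank_bounds[OF fin] by auto
    then have "r \<in> {1..card A}" using r by auto
    then obtain x where x: "x \<in> A" "r = ?rk x"
      using bij_betw_imp_surj_on[OF key_rank_bij[OF fin inj]] by (metis imageE)
    have "key a \<le> key x"
    proof (rule ccontr)
      assume "\<not> key a \<le> key x"
      then have "?rk x < ?rk a"
        using key_rank_strict_mono[OF fin, where x=x and y=a and key=key] a(1) T(1) by auto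
      then show False using r x(2) by simp
    qed
    moreover have "key x \<le> key b"
    proof (rule ccontr)
      assume "\<not> key x \<le> key b"
      then have "?rk b < ?rk x"
        using key_rank_strict_mono[OF fin, where x=b and y=x and key=key] x(1) by auto
      then show False using r x(2) by simp
    qed
    ultimately have "x \<in> T" using T(2) a(1) b(1) x(1) unfolding key_convex_def by blast
    then show "r \<in> ?rk ` T" using x by blast
  qed
qed

lemma interval_unique_max_ruler:
  assumes fin: "finite A" and inj: "inj_on key A"
  shows "interval_unique_max key A (\<lambda>x. multiplicity 2 (key_rank A key x))"
  unfolding interval_unique_max_def
proof (intro allI impI)
  let ?rk = "key_rank A key"
  fix T assume T: "T \<subseteq> A" "T \<noteq> {}" "key_convex key A T"
  have finT: "finite T" using fin T(1) finite_subset by blast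
  have "Min (key ` T) \<in> key ` T" "Max (key ` T) \<in> key ` T"
    using finT T(2) by (auto intro: Min_in Max_in)
  then obtain a b where "a \<in> T" "key a = Min (key ` T)" "b \<in> T" "key b = Max (key ` T)"
    by (metis imageE)
  then have a: "a \<in> T" "\<And>x. x \<in> T \<Longrightarrow> key a \<le> key x"
    and b: "b \<in> T" "\<And>x. x \<in> T \<Longrightarrow> key x \<le> key b"
    using finT by simp_all
  have ranks: "?rk ` T = {?rk a..?rk b}"
    by (rule key_rank_image_key_convex[OF fin inj T(1,3) a b])
  have "a \<in> A" using a(1) T(1) by auto
  then have "0 < ?rk a" "?rk a \<le> ?rk b"
    using key_rank_bounds(1)[OF fin] a(2)[OF b(1)] by (auto intro!: key_rank_mono[OF fin])
  then obtain m where m: "m \<in> T"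
    and max: "\<forall>r\<in>?rk ` T. r \<noteq> ?rk m \<longrightarrow> multiplicity 2 r < multiplicity 2 (?rk m)"
    using multiplicity_2_unique_max[of "?rk a" "?rk b"]
    unfolding ranks[symmetric] by blast
  have "?rk t \<noteq> ?rk m" if "t \<in> T" "t \<noteq> m" for t
    using inj_onD[OF bij_betw_imp_inj_on[OF key_rank_bij[OF fin inj]]] T(1) m that by blast
  then show "\<exists>m\<in>T. \<forall>t\<in>T. t \<noteq> m \<longrightarrow> multiplicity 2 (?rk t) < multiplicity 2 (?rk m)"
    using m max by blast
qed

section \<open>Deleting a point\<close>

definition key_neighbour :: "('a \<Rightarrow> 'b::linorder) \<Rightarrow> 'a set \<Rightarrow> 'a \<Rightarrow> 'a \<Rightarrow> bool" where
  "key_neighbour key A p q \<longleftrightarrow> q \<in> A \<and>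
     (\<forall>x\<in>A. (key x \<le> key p \<longrightarrow> key x \<le> key q) \<and> (key p \<le> key x \<longrightarrow> key q \<le> key x))"

lemma key_neighbour_exists:
  assumes "finite A" "A \<noteq> {}"
  shows "\<exists>q. key_neighbour key A p q"
proof (cases "{x\<in>A. key x \<le> key p} = {}")
  case True
  have "Min (key ` A) \<in> key ` A" using assms by (intro Min_in) auto
  then obtain q where "q \<in> A" "key q = Min (key ` A)" by (metis imageE)
  moreover have "key q \<le> key x" if "x \<in> A" for x
    using calculation(2) assms(1) that by simp
  ultimately show ?thesis using True unfolding key_neighbour_def by blast
next
  case False
  let ?L = "{x\<in>A. key x \<le> key p}"
  have "Max (key ` ?L) \<in> key ` ?L" using False assms(1) by (intro Max_in) auto
  then obtain q where q: "q \<in> A" "key q \<le> key p" "key q = Max (key ` ?L)" by (metis (lifting) imageE mem_Collect_eq)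
  have below: "key x \<le> key q" if "x \<in> A" "key x \<le> key p" for x
    using q(3) assms(1) that by simp
  have "key q \<le> key x" if "key p \<le> key x" for x
    using q(2) that by (rule order_trans)
  with q(1) below show ?thesis unfolding key_neighbour_def by blast
qed

lemma key_convex_delete_avoiding_neighbour:
  assumes conv: "key_convex key (A - {p}) T" and T: "T \<subseteq> A - {p}"
    and nb: "key_neighbour key (A - {p}) p q" and "q \<notin> T"
  shows "key_convex key A T"
  unfolding key_convex_def
proof (intro ballI impI)
  fix a b x assume ab: "a \<in> T" "b \<in> T" and x: "x \<in> A" "key a \<le> key x" "key x \<le> key b"
  show "x \<in> T"
  proof (cases "x = p")
    case True
    have "a \<in> A - {p}" "b \<in> A - {p}" using ab T by auto
    then have "key a \<le> key q" "key q \<le> key b"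
      using nb x(2,3) True unfolding key_neighbour_def by auto
    moreover have "q \<in> A - {p}" using nb unfolding key_neighbour_def by blast
    ultimately have "q \<in> T" using conv ab unfolding key_convex_def by blast
    then show ?thesis using \<open>q \<notin> T\<close> by blast
  next
    case False
    then show ?thesis using conv ab x unfolding key_convex_def by blast
  qed
qed

lemma key_convex_delete_with_neighbour:
  assumes conv: "key_convex key (A - {p}) T"
    and nb: "key_neighbour key (A - {p}) p q" and "q \<in> T"
  shows "key_convex key A (insert p T)"
  unfolding key_convex_def
proof (intro ballI impI)
  fix a b x assume ab: "a \<in> insert p T" "b \<in> insert p T"
    and x: "x \<in> A" "key a \<le> key x" "key x \<le> key b"
  show "x \<in> insert p T"
  proof (cases "x = p")
    case False
    define a' where "a' = (if a = p then q else a)"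
    define b' where "b' = (if b = p then q else b)"
    have x': "x \<in> A - {p}" using x(1) False by simp
    have "a' \<in> T" "b' \<in> T" using ab \<open>q \<in> T\<close> unfolding a'_def b'_def by auto
    moreover have "key a' \<le> key x"
      using nb x' x(2) unfolding a'_def key_neighbour_def by (cases "a = p") auto
    moreover have "key x \<le> key b'"
      using nb x' x(3) unfolding b'_def key_neighbour_def by (cases "b = p") auto
    ultimately show ?thesis using conv x' unfolding key_convex_def by blast
  qed simp
qed

lemma unique_max_recolour_neighbour:
  fixes c :: "'a \<Rightarrow> nat"
  assumes m: "m \<in> insert p T" and max: "\<forall>t\<in>insert p T. t \<noteq> m \<longrightarrow> c t < c m"
    and "q \<in> T" "q \<noteq> p" "p \<notin> T"
  shows "\<exists>m\<in>T. \<forall>t\<in>T. t \<noteq> m \<longrightarrow> (c(q := max (c q) (c p))) t < (c(q := max (c q) (c p))) m"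
    (is "\<exists>m\<in>T. \<forall>t\<in>T. t \<noteq> m \<longrightarrow> ?c' t < ?c' m")
proof (cases "m = p")
  case True
  \<comment> \<open>The deleted point carried the maximum; its neighbour inherits the colour.\<close>
  have "c q < c p" using max \<open>q \<in> T\<close> \<open>q \<noteq> p\<close> True by blast
  have "?c' t < ?c' q" if "t \<in> T" "t \<noteq> q" for t
  proof -
    have "t \<noteq> p" using that(1) \<open>p \<notin> T\<close> by blast
    then show ?thesis using max that \<open>c q < c p\<close> True by auto
  qed
  then show ?thesis using \<open>q \<in> T\<close> by blast
next
  case False
  then have "m \<in> T" "c p < c m" using m max by auto
  have "?c' t < ?c' m" if "t \<in> T" "t \<noteq> m" for t
  proof -
    have "c t < c m" using max that by blast
    then have "?c' t < c m" using \<open>c p < c m\<close> by (cases "t = q") simp_all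
    moreover have "c m \<le> ?c' m" by simp
    ultimately show ?thesis by simp
  qed
  then show ?thesis using \<open>m \<in> T\<close> by blast
qed

lemma interval_unique_max_delete:
  assumes um: "interval_unique_max key A c" and "p \<in> A"
    and nb: "key_neighbour key (A - {p}) p q"
  shows "interval_unique_max key (A - {p}) (c(q := max (c q) (c p)))"
    (is "interval_unique_max _ _ ?c'")
  unfolding interval_unique_max_def
proof (intro allI impI)
  fix T assume T: "T \<subseteq> A - {p}" "T \<noteq> {}" "key_convex key (A - {p}) T"
  show "\<exists>m\<in>T. \<forall>t\<in>T. t \<noteq> m \<longrightarrow> ?c' t < ?c' m"
  proof (cases "q \<in> T")
    case False
    then have "key_convex key A T"
      using key_convex_delete_avoiding_neighbour[OF T(3,1) nb] by blast
    then obtain m where m: "m \<in> T" and max: "\<forall>t\<in>T. t \<noteq> m \<longrightarrow> c t < c m"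
      using interval_unique_maxD[OF um] T by blast
    have unchanged: "?c' t = c t" if "t \<in> T" for t using False that by auto
    show ?thesis
    proof (intro bexI[OF _ m] ballI impI)
      fix t assume "t \<in> T" "t \<noteq> m"
      then show "?c' t < ?c' m" using max m unchanged by simp
    qed
  next
    case True
    have "key_convex key A (insert p T)"
      by (rule key_convex_delete_with_neighbour[OF T(3) nb True])
    moreover have "insert p T \<subseteq> A" using T(1) \<open>p \<in> A\<close> by blast
    ultimately obtain m where m: "m \<in> insert p T"
      and max: "\<forall>t\<in>insert p T. t \<noteq> m \<longrightarrow> c t < c m"
      using interval_unique_maxD[OF um] by blast
    have "q \<noteq> p" "p \<notin> T" using nb T(1) unfolding key_neighbour_def by auto
    then show ?thesis by (rule unique_max_recolour_neighbour[OF m max True])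
  qed
qed

section \<open>Colourings by chains\<close>

definition chain_coloring ::
    "(point \<Rightarrow> nat) \<Rightarrow> (nat \<Rightarrow> point \<Rightarrow> 'b::linorder) \<Rightarrow> point set \<Rightarrow> (point \<Rightarrow> nat) \<Rightarrow> bool" where
  "chain_coloring cls key S c \<longleftrightarrow> finite S \<and>
     (\<forall>j a1 b1 a2 b2. key_convex (key j) {x\<in>S. cls x = j} (rect a1 b1 a2 b2 \<inter> {x\<in>S. cls x = j})) \<and>
     (\<forall>x\<in>S. \<forall>y\<in>S. cls x \<noteq> cls y \<longrightarrow> c x \<noteq> c y) \<and>
     (\<forall>j. interval_unique_max (key j) {x\<in>S. cls x = j} c)"

lemma chain_coloringD:
  assumes "chain_coloring cls key S c"
  shows "finite S"
    and "key_convex (key j) {x\<in>S. cls x = j} (rect a1 b1 a2 b2 \<inter> {x\<in>S. cls x = j})"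
    and "x \<in> S \<Longrightarrow> y \<in> S \<Longrightarrow> cls x \<noteq> cls y \<Longrightarrow> c x \<noteq> c y"
    and "interval_unique_max (key j) {x\<in>S. cls x = j} c"
  using assms unfolding chain_coloring_def by blast+

lemma chain_coloring_conflict_free:
  assumes inv: "chain_coloring cls key S c"
  shows "conflict_free_rect S c"
  unfolding conflict_free_rect_def
proof (intro allI impI)
  fix a1 b1 a2 b2
  let ?R = "rect a1 b1 a2 b2"
  assume "?R \<inter> S \<noteq> {}"
  then obtain p where p: "p \<in> ?R \<inter> S" by blast
  let ?C = "{x\<in>S. cls x = cls p}"
  have "?R \<inter> ?C \<subseteq> ?C" "?R \<inter> ?C \<noteq> {}" using p by auto
  then obtain m where m: "m \<in> ?R \<inter> ?C" and max: "\<forall>t\<in>?R \<inter> ?C. t \<noteq> m \<longrightarrow> c t < c m"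
    using interval_unique_maxD[OF chain_coloringD(4)[OF inv] _ _ chain_coloringD(2)[OF inv]] by blast
  have "c q \<noteq> c m" if q: "q \<in> ?R \<inter> S" "q \<noteq> m" for q
  proof (cases "cls q = cls p")
    case True
    then show ?thesis using q max by fastforce
  next
    case False
    then show ?thesis using chain_coloringD(3)[OF inv, of q m] q m by auto
  qed
  then show "\<exists>p\<in>?R \<inter> S. \<forall>q\<in>?R \<inter> S. q \<noteq> p \<longrightarrow> c q \<noteq> c p" using m by blast
qed

lemma chain_coloring_recolour_unique_max:
  assumes inv: "chain_coloring cls key S c" and p: "p \<in> S" and q: "cls q = cls p"
    and nb: "{x\<in>S. cls x = cls p} - {p} \<noteq> {} \<Longrightarrow>
      key_neighbour (key (cls p)) ({x\<in>S. cls x = cls p} - {p}) p q"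
  shows "interval_unique_max (key j) {x\<in>S - {p}. cls x = j} (c(q := max (c q) (c p)))"
    (is "interval_unique_max _ _ ?c'")
proof (cases "j = cls p")
  case True
  have C: "{x\<in>S - {p}. cls x = cls p} = {x\<in>S. cls x = cls p} - {p}" by auto
  show ?thesis unfolding True C
  proof (cases "{x\<in>S. cls x = cls p} - {p} = {}")
    case True
    show "interval_unique_max (key (cls p)) ({x\<in>S. cls x = cls p} - {p}) ?c'"
      unfolding True by (rule interval_unique_max_empty)
  next
    case False
    show "interval_unique_max (key (cls p)) ({x\<in>S. cls x = cls p} - {p}) ?c'"
      by (rule interval_unique_max_delete[OF chain_coloringD(4)[OF inv]]) (use p nb[OF False] in auto)
  qed
next
  case False
  then have C: "{x\<in>S - {p}. cls x = j} = {x\<in>S. cls x = j}" by auto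
  have same: "?c' x = c x" if "x \<in> {x\<in>S. cls x = j}" for x
    using False that q by auto
  show ?thesis unfolding C
    using chain_coloringD(4)[OF inv] by (rule interval_unique_max_strict_mono) (metis same)
qed

lemma chain_coloring_recolour:
  assumes inv: "chain_coloring cls key S c" and p: "p \<in> S" and q: "q \<in> S" "cls q = cls p"
    and nb: "{x\<in>S. cls x = cls p} - {p} \<noteq> {} \<Longrightarrow>
      key_neighbour (key (cls p)) ({x\<in>S. cls x = cls p} - {p}) p q"
  shows "chain_coloring cls key (S - {p}) (c(q := max (c q) (c p)))"
    (is "chain_coloring _ _ _ ?c'")
proof -
  have old_colour: "\<exists>u\<in>S. cls u = cls x \<and> ?c' x = c u" if x: "x \<in> S - {p}" for x
  proof (cases "x = q \<and> c q < c p")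
    case True
    then show ?thesis using p q by auto
  next
    case False
    then show ?thesis using x by auto
  qed
  have disjoint: "\<forall>x\<in>S - {p}. \<forall>y\<in>S - {p}. cls x \<noteq> cls y \<longrightarrow> ?c' x \<noteq> ?c' y"
  proof (intro ballI impI)
    fix x y assume x: "x \<in> S - {p}" and y: "y \<in> S - {p}" and "cls x \<noteq> cls y"
    obtain u where "u \<in> S" "cls u = cls x" "?c' x = c u" using old_colour[OF x] by blast
    moreover obtain w where "w \<in> S" "cls w = cls y" "?c' y = c w" using old_colour[OF y] by blast
    ultimately show "?c' x \<noteq> ?c' y"
      using chain_coloringD(3)[OF inv, of u w] \<open>cls x \<noteq> cls y\<close> by auto
  qed
  have convex: "key_convex (key j) {x\<in>S - {p}. cls x = j} (rect a1 b1 a2 b2 \<inter> {x\<in>S - {p}. cls x = j})"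
    for j a1 b1 a2 b2
    using chain_coloringD(2)[OF inv] by (rule key_convex_Int_subset) auto
  show ?thesis
    unfolding chain_coloring_def
    using chain_coloringD(1)[OF inv] convex disjoint chain_coloring_recolour_unique_max[OF inv p q(2) nb]
    by simp
qed

lemma chain_coloring_delete:
  assumes inv: "chain_coloring cls key S c" and p: "p \<in> S"
  shows "\<exists>c'. card {x\<in>S - {p}. c' x \<noteq> c x} \<le> 1 \<and> c' ` (S - {p}) \<subseteq> c ` S \<and>
           chain_coloring cls key (S - {p}) c'"
proof -
  define A where "A = {x\<in>S. cls x = cls p}"
  have "finite (A - {p})" "p \<in> A" using chain_coloringD(1)[OF inv] p unfolding A_def by simp_all
  \<comment> \<open>If \<open>p\<close> is alone in its class, \<open>q = p\<close> makes the recolouring trivial.\<close>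
  obtain q where q: "q \<in> A" and nb: "A - {p} \<noteq> {} \<Longrightarrow> key_neighbour (key (cls p)) (A - {p}) p q"
  proof (cases "A - {p} = {}")
    case True
    then show ?thesis using that \<open>p \<in> A\<close> by blast
  next
    case False
    then obtain q where "key_neighbour (key (cls p)) (A - {p}) p q"
      using key_neighbour_exists[OF \<open>finite (A - {p})\<close> False] by blast
    moreover from this have "q \<in> A" unfolding key_neighbour_def by blast
    ultimately show ?thesis using that by blast
  qed
  define c' where "c' = c(q := max (c q) (c p))"
  have "card {x\<in>S - {p}. c' x \<noteq> c x} \<le> card {q}"
    by (rule card_mono) (auto simp: c'_def)
  moreover have "c' ` (S - {p}) \<subseteq> c ` S"
    using p q unfolding c'_def A_def by (auto simp: max_def)
  moreover have "chain_coloring cls key (S - {p}) c'"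
    unfolding c'_def by (rule chain_coloring_recolour[OF inv p]) (use q nb in \<open>simp_all add: A_def\<close>)
  ultimately show ?thesis by (intro exI[of _ c']) simp
qed

lemma chain_coloring_weak_del:
  assumes "chain_coloring cls key S c" "card (c ` S) \<le> k"
  shows "weak_del k S c"
  using chain_coloringD(1)[OF assms(1)] assms
proof (induction S arbitrary: c rule: finite_psubset_induct)
  case (psubset S)
  show ?case
  proof (rule weak_del.intros)
    show "conflict_free_rect S c" using psubset.prems(1) by (rule chain_coloring_conflict_free)
    show "\<forall>p\<in>S. \<exists>c'. card {q \<in> S - {p}. c' q \<noteq> c q} \<le> 1 \<and> weak_del k (S - {p}) c'"
    proof
      fix p assume p: "p \<in> S"
      obtain c' where c': "card {x\<in>S - {p}. c' x \<noteq> c x} \<le> 1" "c' ` (S - {p}) \<subseteq> c ` S"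
        "chain_coloring cls key (S - {p}) c'"
        using chain_coloring_delete[OF psubset.prems(1) p] by blast
      have "card (c' ` (S - {p})) \<le> k"
        using card_mono[OF _ c'(2)] psubset.hyps psubset.prems(2) by fastforce
      then have "weak_del k (S - {p}) c'" using psubset.IH[of "S - {p}"] p c'(3) by blast
      then show "\<exists>c'. card {q \<in> S - {p}. c' q \<noteq> c q} \<le> 1 \<and> weak_del k (S - {p}) c'"
        using c'(1) by blast
    qed
  qed (use psubset in auto)
qed

section \<open>Monotone chains\<close>

definition dir_le :: "bool \<Rightarrow> point \<Rightarrow> point \<Rightarrow> bool" where
  "dir_le up x y \<longleftrightarrow> fst x \<le> fst y \<and> (if up then snd x \<le> snd y else snd y \<le> snd x)"

definition monotone_chain :: "bool \<Rightarrow> point set \<Rightarrow> bool" where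
  "monotone_chain up D \<longleftrightarrow> (\<forall>x\<in>D. \<forall>y\<in>D. dir_le up x y \<or> dir_le up y x)"

text \<open>A linear functional that is strictly monotone along every chain of \<open>dir_le up\<close>.\<close>
definition chain_key :: "bool \<Rightarrow> point \<Rightarrow> real" where
  "chain_key up x = (if up then fst x + snd x else fst x - snd x)"

lemma dir_le_refl: "dir_le up x x"
  unfolding dir_le_def by simp

lemma dir_le_trans: "dir_le up x y \<Longrightarrow> dir_le up y z \<Longrightarrow> dir_le up x z"
  unfolding dir_le_def by (cases up) auto

lemma dir_le_antisym: "dir_le up x y \<Longrightarrow> dir_le up y x \<Longrightarrow> x = y"
  unfolding dir_le_def by (cases up) (auto simp: prod_eq_iff)

lemma dir_le_incomparable:
  "\<not> dir_le True x y \<Longrightarrow> \<not> dir_le True y x \<Longrightarrow> dir_le False x y \<or> dir_le False y x"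
  unfolding dir_le_def by auto

lemma dir_le_rect:
  "dir_le up a x \<Longrightarrow> dir_le up x b \<Longrightarrow> a \<in> rect a1 b1 a2 b2 \<Longrightarrow> b \<in> rect a1 b1 a2 b2 \<Longrightarrow>
     x \<in> rect a1 b1 a2 b2"
  unfolding dir_le_def rect_def by (cases up) auto

lemma monotone_chain_key_le:
  assumes "monotone_chain up D" "x \<in> D" "y \<in> D" "chain_key up x \<le> chain_key up y"
  shows "dir_le up x y"
proof -
  have "dir_le up x y \<or> dir_le up y x" using assms(1-3) unfolding monotone_chain_def by blast
  then show ?thesis
  proof
    assume "dir_le up y x"
    with assms(4) have "x = y" unfolding dir_le_def chain_key_def by (cases up) (auto simp: prod_eq_iff)
    then show ?thesis by (simp add: dir_le_refl)
  qed
qed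

lemma monotone_chain_key_inj:
  assumes "monotone_chain up D"
  shows "inj_on (chain_key up) D"
proof (rule inj_onI)
  fix x y assume "x \<in> D" "y \<in> D" "chain_key up x = chain_key up y"
  then have "dir_le up x y" "dir_le up y x" using monotone_chain_key_le[OF assms] by simp_all
  then show "x = y" by (rule dir_le_antisym)
qed

lemma monotone_chain_rect_key_convex:
  assumes "monotone_chain up D"
  shows "key_convex (chain_key up) D (rect a1 b1 a2 b2 \<inter> D)"
  unfolding key_convex_def
proof (intro ballI impI)
  fix a b x assume a: "a \<in> rect a1 b1 a2 b2 \<inter> D" and b: "b \<in> rect a1 b1 a2 b2 \<inter> D"
    and x: "x \<in> D" "chain_key up a \<le> chain_key up x" "chain_key up x \<le> chain_key up b"
  have "dir_le up a x" "dir_le up x b"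
    using monotone_chain_key_le[OF assms] a b x by blast+
  then show "x \<in> rect a1 b1 a2 b2 \<inter> D" using dir_le_rect a b x(1) by blast
qed

definition chains_ending_at :: "point set \<Rightarrow> point \<Rightarrow> point set set" where
  "chains_ending_at Q x = {D. D \<subseteq> Q \<and> monotone_chain True D \<and> x \<in> D \<and> (\<forall>d\<in>D. dir_le True d x)}"

definition chain_height :: "point set \<Rightarrow> point \<Rightarrow> nat" where
  "chain_height Q x = Max (card ` chains_ending_at Q x)"

lemma chain_height:
  assumes "finite Q" "x \<in> Q"
  shows "chain_height Q x \<in> card ` chains_ending_at Q x"
    and "D \<in> chains_ending_at Q x \<Longrightarrow> card D \<le> chain_height Q x"
    and "1 \<le> chain_height Q x"
proof -
  have fin: "finite (card ` chains_ending_at Q x)"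
    using assms(1) unfolding chains_ending_at_def by simp
  show le: "card D \<le> chain_height Q x" if "D \<in> chains_ending_at Q x" for D
    using fin that unfolding chain_height_def by (intro Max_ge) auto
  have "{x} \<in> chains_ending_at Q x"
    using assms(2) dir_le_refl unfolding chains_ending_at_def monotone_chain_def by auto
  then show "chain_height Q x \<in> card ` chains_ending_at Q x"
    using fin unfolding chain_height_def by (auto intro: Max_in)
  from le[OF \<open>{x} \<in> chains_ending_at Q x\<close>] show "1 \<le> chain_height Q x" by simp
qed

lemma chain_height_strict_mono:
  assumes fin: "finite Q" and xy: "x \<in> Q" "y \<in> Q" "dir_le True x y" "x \<noteq> y"
  shows "chain_height Q x < chain_height Q y"
proof -
  obtain D where D: "chain_height Q x = card D" "D \<subseteq> Q" "monotone_chain True D" "x \<in> D"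
    "\<forall>d\<in>D. dir_le True d x"
    using chain_height(1)[OF fin xy(1)] unfolding chains_ending_at_def by blast
  have "finite D" using D(2) fin finite_subset by blast
  have "y \<notin> D" using D(5) xy(3,4) dir_le_antisym[of True x y] by blast
  have below_y: "\<forall>d\<in>insert y D. dir_le True d y"
    using D(5) dir_le_trans[OF _ xy(3)] dir_le_refl[of True y] by blast
  moreover have "monotone_chain True (insert y D)"
    using D(3) below_y unfolding monotone_chain_def by blast
  ultimately have "insert y D \<in> chains_ending_at Q y"
    unfolding chains_ending_at_def using D(2) xy(2) by blast
  then have "card (insert y D) \<le> chain_height Q y" by (rule chain_height(2)[OF fin xy(2)])
  then show ?thesis using D(1) \<open>finite D\<close> \<open>y \<notin> D\<close> by simp
qed

lemma partition_into_decreasing_chains: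
  assumes fin: "finite Q" and short: "\<And>D. D \<subseteq> Q \<Longrightarrow> monotone_chain True D \<Longrightarrow> card D \<le> h"
  shows "\<exists>g. (\<forall>x\<in>Q. g x < h) \<and> (\<forall>j. monotone_chain False {x\<in>Q. g x = j})"
proof -
  have "chain_height Q x - 1 < h" if x: "x \<in> Q" for x
  proof -
    obtain D where "chain_height Q x = card D" "D \<in> chains_ending_at Q x"
      using chain_height(1)[OF fin x] by blast
    then have "chain_height Q x \<le> h" using short[of D] unfolding chains_ending_at_def by simp
    then show ?thesis using chain_height(3)[OF fin x] by linarith
  qed
  moreover have "monotone_chain False {x\<in>Q. chain_height Q x - 1 = j}" for j
    unfolding monotone_chain_def
  proof (intro ballI)
    fix x y assume "x \<in> {x\<in>Q. chain_height Q x - 1 = j}" "y \<in> {x\<in>Q. chain_height Q x - 1 = j}"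
    then have xy: "x \<in> Q" "y \<in> Q" and "chain_height Q x - 1 = chain_height Q y - 1" by auto
    then have eq: "chain_height Q x = chain_height Q y"
      using chain_height(3)[OF fin xy(1)] chain_height(3)[OF fin xy(2)] by arith
    show "dir_le False x y \<or> dir_le False y x"
    proof (cases "x = y")
      case True
      then show ?thesis by (simp add: dir_le_refl)
    next
      case False
      have "\<not> dir_le True x y" using chain_height_strict_mono[OF fin xy(1,2)] False eq by auto
      moreover have "\<not> dir_le True y x" using chain_height_strict_mono[OF fin xy(2,1)] False eq by auto
      ultimately show ?thesis by (rule dir_le_incomparable)
    qed
  qed
  ultimately show ?thesis by (intro exI[of _ "\<lambda>x. chain_height Q x - 1"]) blast
qed

lemma chain_partition_add_chain:
  assumes D: "D \<subseteq> Q" "monotone_chain True D"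
    and g: "\<forall>x\<in>Q - D. g x < r" "\<forall>j. monotone_chain (up j) {x\<in>Q - D. g x = j}"
  shows "\<exists>g'. (\<forall>x\<in>Q. g' x < Suc r) \<and> (\<forall>j. monotone_chain ((up(r := True)) j) {x\<in>Q. g' x = j})"
proof -
  define g' where "g' x = (if x \<in> D then r else g x)" for x
  have "\<forall>x\<in>Q. g' x < Suc r" using g(1) unfolding g'_def by (simp add: less_SucI)
  moreover have levels: "{x\<in>Q. g' x = j} = (if j = r then D else {x\<in>Q - D. g x = j})" for j
    using g(1) D(1) unfolding g'_def by auto
  have "monotone_chain ((up(r := True)) j) {x\<in>Q. g' x = j}" for j
    unfolding levels using g(2) D(2) by simp
  ultimately show ?thesis by blast
qed

lemma chain_count_step:
  fixes s :: real
  assumes "1 \<le> s" "finite Q" "D \<subseteq> Q" "s \<le> real (card D)"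
    and "real r \<le> real (card (Q - D)) / s + s"
  shows "real (Suc r) \<le> real (card Q) / s + s"
proof -
  have "real (card (Q - D)) = real (card Q) - real (card D)"
    using card_Diff_subset[OF finite_subset[OF assms(3,2)] assms(3)] card_mono[OF assms(2,3)]
    by simp
  then have "real (card (Q - D)) / s \<le> (real (card Q) - s) / s"
    using assms(1,4) by (intro divide_right_mono) simp_all
  also have "\<dots> = real (card Q) / s - 1" using assms(1) by (simp add: diff_divide_distrib)
  finally show ?thesis using assms(5) by simp
qed

lemma partition_into_monotone_chains:
  fixes s :: real
  assumes "1 \<le> s" "finite Q"
  shows "\<exists>r g up. real r \<le> real (card Q) / s + s \<and> (\<forall>x\<in>Q. g x < r) \<and>
           (\<forall>j. monotone_chain (up j) {x\<in>Q. g x = j})"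
  using assms(2)
proof (induction Q rule: finite_psubset_induct)
  case (psubset Q)
  show ?case
  proof (cases "\<exists>D\<subseteq>Q. monotone_chain True D \<and> s \<le> real (card D)")
    case True
    then obtain D where D: "D \<subseteq> Q" "monotone_chain True D" "s \<le> real (card D)" by blast
    then have "D \<noteq> {}" using assms(1) by auto
    then have smaller: "Q - D \<subset> Q" using D(1) by blast
    obtain r g up where IH: "real r \<le> real (card (Q - D)) / s + s" "\<forall>x\<in>Q - D. g x < r"
      "\<forall>j. monotone_chain (up j) {x\<in>Q - D. g x = j}"
      using psubset.IH[OF smaller] by blast
    have "real (Suc r) \<le> real (card Q) / s + s"
      using chain_count_step[OF assms(1) psubset.hyps D(1,3) IH(1)] .
    moreover obtain g' where "\<forall>x\<in>Q. g' x < Suc r"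
      "\<forall>j. monotone_chain ((up(r := True)) j) {x\<in>Q. g' x = j}"
      using chain_partition_add_chain[OF D(1,2) IH(2,3)] by blast
    ultimately show ?thesis by (intro exI[of _ "Suc r"] exI[of _ g'] exI[of _ "up(r := True)"]) blast
  next
    case False
    define h where "h = nat \<lfloor>s\<rfloor>"
    have "real h \<le> s" unfolding h_def using assms(1) by (simp add: of_nat_floor)
    have "card D \<le> h" if "D \<subseteq> Q" "monotone_chain True D" for D
    proof -
      from False that have "\<not> s \<le> real (card D)" by blast
      then show ?thesis unfolding h_def by (intro le_nat_floor) simp
    qed
    then obtain g where "\<forall>x\<in>Q. g x < h" "\<forall>j. monotone_chain False {x\<in>Q. g x = j}"
      using partition_into_decreasing_chains[OF psubset.hyps] by blast
    moreover have "real h \<le> real (card Q) / s + s"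
      using \<open>real h \<le> s\<close> assms(1) by (simp add: add_increasing)
    ultimately show ?thesis by (intro exI[of _ h] exI[of _ g] exI[of _ "\<lambda>_. False"]) blast
  qed
qed

section \<open>The ruler colouring of a chain partition\<close>

text \<open>The residue modulo \<open>r\<close> records the class, so distinct classes get disjoint palettes.\<close>
definition ruler_coloring ::
    "(point \<Rightarrow> nat) \<Rightarrow> nat \<Rightarrow> (nat \<Rightarrow> point \<Rightarrow> 'b::linorder) \<Rightarrow> point set \<Rightarrow> point \<Rightarrow> nat" where
  "ruler_coloring cls r key S x =
     multiplicity 2 (key_rank {y\<in>S. cls y = cls x} (key (cls x)) x) * r + cls x"

lemma chain_coloring_ruler:
  assumes fin: "finite P" and g: "\<forall>x\<in>P. g x < r"
    and chains: "\<forall>j. monotone_chain (up j) {x\<in>P. g x = j}"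
  shows "chain_coloring g (\<lambda>j. chain_key (up j)) P (ruler_coloring g r (\<lambda>j. chain_key (up j)) P)"
    (is "chain_coloring g ?key P ?c")
proof -
  have "?c x mod r = g x" if "x \<in> P" for x
    unfolding ruler_coloring_def using g that by simp
  then have disjoint: "\<forall>x\<in>P. \<forall>y\<in>P. g x \<noteq> g y \<longrightarrow> ?c x \<noteq> ?c y" by metis
  have unique_max: "interval_unique_max (?key j) {x\<in>P. g x = j} ?c" for j
  proof (rule interval_unique_max_strict_mono[OF interval_unique_max_ruler])
    show "finite {x\<in>P. g x = j}" using fin by simp
    show "inj_on (?key j) {x\<in>P. g x = j}" using chains by (simp add: monotone_chain_key_inj)
    fix x y assume xy: "x \<in> {x\<in>P. g x = j}" "y \<in> {x\<in>P. g x = j}"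
      and less: "multiplicity 2 (key_rank {x\<in>P. g x = j} (?key j) x)
        < multiplicity 2 (key_rank {x\<in>P. g x = j} (?key j) y)"
    have "0 < r" using xy g by auto
    then show "?c x < ?c y" using xy less unfolding ruler_coloring_def by simp
  qed
  show ?thesis
    unfolding chain_coloring_def
    using fin disjoint unique_max chains by (simp add: monotone_chain_rect_key_convex)
qed

lemma multiplicity_2_le_log:
  fixes n m :: nat
  assumes "0 < n" "n \<le> m"
  shows "multiplicity 2 n \<le> nat \<lfloor>log 2 m\<rfloor>"
proof -
  have "2 ^ multiplicity 2 n \<le> m"
    using dvd_imp_le[OF multiplicity_dvd[of 2 n] assms(1)] assms(2) by linarith
  then show ?thesis by (intro le_nat_floor le_log2_of_power)
qed

lemma card_ruler_coloring:
  assumes fin: "finite P" and g: "\<forall>x\<in>P. g x < r"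
  shows "card (ruler_coloring g r key P ` P) \<le> r * (nat \<lfloor>log 2 (card P)\<rfloor> + 1)"
proof -
  define L where "L = nat \<lfloor>log 2 (card P)\<rfloor>"
  have "ruler_coloring g r key P ` P \<subseteq> (\<lambda>(j, v). v * r + j) ` ({..<r} \<times> {..L})"
  proof
    fix y assume "y \<in> ruler_coloring g r key P ` P"
    then obtain x where x: "x \<in> P" "y = ruler_coloring g r key P x" by blast
    let ?C = "{y\<in>P. g y = g x}"
    have "finite ?C" "x \<in> ?C" using fin x(1) by auto
    moreover have "card ?C \<le> card P" using fin by (intro card_mono) auto
    ultimately have "0 < key_rank ?C (key (g x)) x" "key_rank ?C (key (g x)) x \<le> card P"
      using key_rank_bounds[of ?C x "key (g x)"] by auto
    then have "multiplicity 2 (key_rank ?C (key (g x)) x) \<le> L"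
      unfolding L_def by (rule multiplicity_2_le_log)
    then have "(g x, multiplicity 2 (key_rank ?C (key (g x)) x)) \<in> {..<r} \<times> {..L}"
      using g x(1) by auto
    then show "y \<in> (\<lambda>(j, v). v * r + j) ` ({..<r} \<times> {..L})"
      unfolding x(2) ruler_coloring_def by (rule rev_image_eqI) simp
  qed
  then have "card (ruler_coloring g r key P ` P) \<le> card ((\<lambda>(j, v). v * r + j) ` ({..<r} \<times> {..L}))"
    by (rule card_mono[rotated]) simp
  also have "\<dots> \<le> card ({..<r} \<times> {..L})" by (rule card_image_le) simp
  also have "\<dots> = r * (L + 1)" by (simp add: card_cartesian_product)
  finally show ?thesis unfolding L_def .
qed

lemma sqrt_log_color_bound:
  assumes "2 \<le> n" "real r \<le> 2 * sqrt (real n)"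
  shows "real (r * (nat \<lfloor>log 2 (real n)\<rfloor> + 1)) \<le> 4 / ln 2 * sqrt (real n) * ln (real n)"
proof -
  have "1 \<le> log 2 (real n)" using assms(1) by simp
  moreover have "real (nat \<lfloor>log 2 (real n)\<rfloor>) \<le> log 2 (real n)"
    using calculation by (simp add: of_nat_floor)
  ultimately have L: "real (nat \<lfloor>log 2 (real n)\<rfloor> + 1) \<le> 2 * log 2 (real n)"
    by (simp only: of_nat_add of_nat_1)
  have "real (r * (nat \<lfloor>log 2 (real n)\<rfloor> + 1)) = real r * real (nat \<lfloor>log 2 (real n)\<rfloor> + 1)"
    by (simp only: of_nat_mult)
  also have "\<dots> \<le> (2 * sqrt (real n)) * (2 * log 2 (real n))"
    using assms(2) L \<open>1 \<le> log 2 (real n)\<close> by (intro mult_mono) simp_all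
  also have "\<dots> = 4 / ln 2 * sqrt (real n) * ln (real n)" by (simp add: log_def)
  finally show ?thesis .
qed

theorem mainTheorem13:
  shows "\<exists>C > 0. \<forall>P :: point set. finite P \<and> card P \<ge> 2 \<longrightarrow>
           (\<exists>k c. real k \<le> C * sqrt (real (card P)) * ln (real (card P)) \<and> weak_del k P c)"
proof (intro exI[of _ "4 / ln 2"] conjI allI impI)
  show "(0::real) < 4 / ln 2" by simp
next
  fix P :: "point set" assume P: "finite P \<and> 2 \<le> card P"
  have "1 \<le> sqrt (real (card P))" using P by simp
  then obtain r g up where r: "real r \<le> real (card P) / sqrt (card P) + sqrt (card P)"
    and g: "\<forall>x\<in>P. g x < r" and chains: "\<forall>j. monotone_chain (up j) {x\<in>P. g x = j}"
    using partition_into_monotone_chains[OF _ conjunct1[OF P]] by blast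
  let ?c = "ruler_coloring g r (\<lambda>j. chain_key (up j)) P"
  have "real r \<le> 2 * sqrt (card P)" using r by (simp add: real_div_sqrt)
  then have "real (card (?c ` P)) \<le> 4 / ln 2 * sqrt (card P) * ln (card P)"
    using card_ruler_coloring[OF conjunct1[OF P] g] sqrt_log_color_bound[of "card P" r] P
    by (meson of_nat_le_iff order_trans)
  moreover have "weak_del (card (?c ` P)) P ?c"
    using chain_coloring_ruler[OF conjunct1[OF P] g chains] by (rule chain_coloring_weak_del) simp
  ultimately show "\<exists>k c. real k \<le> 4 / ln 2 * sqrt (card P) * ln (card P) \<and> weak_del k P c"
    by blast
qed

end
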